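(* Let $\mathcal{P}_{n,k}$ be the set of all CPWL functions $p\colon\mathbb{R}^n\to\mathbb{R}$ with exactly $k$ distinct linear components, and for $p\in\mathcal{P}_{n,k}$ let $\mathcal{C}_{n,k}(p)$ be the collection of all families of closed convex subsets of $\mathbb{R}^n$ whose union is $\mathbb{R}^n$ and on each of which $p$ is affine. Then $k\leq\min_{\mathcal{Q}\in\mathcal{C}_{n,k}(p)}|\mathcal{Q}|\leq\phi(n,k)$, where $\phi(n,k)=\min\left(\sum_{i=0}^n \binom{(k^2-k)/2}{i},\,k!\right)$.
   Context: A function $p\colon\mathbb{R}^n\to\mathbb{R}$ is CPWL (continuous piecewise linear) if there exist finitely many closed subsets $\mathcal{U}_1,\dots,\mathcal{U}_m$ of $\mathbb{R}^n$ whose union is $\mathbb{R}^n$ and such that $p$ is affine on each $\mathcal{U}_i$. An affine function $f$ is a linear component of $p$ if there is a nonempty subfamily of a minimum-size family of such closed subsets on whose union $f=p$. *)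

theory Defs
  imports "HOL-Analysis.Analysis"
begin

text \<open>Functions on R^n are modelled as functions on real^'n, with n = CARD('n).\<close>

definition affine_fun :: "(real^'n \<Rightarrow> real) \<Rightarrow> bool" where
  "affine_fun f \<longleftrightarrow> (\<exists>a b. \<forall>x. f x = inner a x + b)"

definition affine_on_set :: "(real^'n \<Rightarrow> real) \<Rightarrow> (real^'n) set \<Rightarrow> bool" where
  "affine_on_set p S \<longleftrightarrow> (\<exists>f. affine_fun f \<and> (\<forall>x\<in>S. p x = f x))"

definition cpwl_cover :: "(real^'n \<Rightarrow> real) \<Rightarrow> (real^'n) set set \<Rightarrow> bool" where
  "cpwl_cover p U \<longleftrightarrow> finite U \<and> (\<forall>S\<in>U. closed S \<and> affine_on_set p S) \<and> \<Union>U = UNIV"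

definition is_cpwl :: "(real^'n \<Rightarrow> real) \<Rightarrow> bool" where
  "is_cpwl p \<longleftrightarrow> (\<exists>U. cpwl_cover p U)"

definition min_pieces :: "(real^'n \<Rightarrow> real) \<Rightarrow> nat" where
  "min_pieces p = (LEAST m. \<exists>U. cpwl_cover p U \<and> card U = m)"

definition linear_components :: "(real^'n \<Rightarrow> real) \<Rightarrow> (real^'n \<Rightarrow> real) set" where
  "linear_components p = {f. affine_fun f \<and>
      (\<exists>U. cpwl_cover p U \<and> card U = min_pieces p \<and>
         (\<exists>V. V \<subseteq> U \<and> V \<noteq> {} \<and> (\<forall>x\<in>\<Union>V. f x = p x)))}"

definition convex_covers :: "(real^'n \<Rightarrow> real) \<Rightarrow> (real^'n) set set set" where
  "convex_covers p = {Q. (\<forall>S\<in>Q. closed S \<and> convex S \<and> affine_on_set p S) \<and> \<Union>Q = UNIV}"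

definition phi :: "nat \<Rightarrow> nat \<Rightarrow> nat" where
  "phi n k = min (\<Sum>i=0..n. ((k^2 - k) div 2) choose i) (fact k)"

end

theory Submission
  imports Defs "HOL-Combinatorics.Permutations"
begin

text \<open>
  Lower bound: in a cover with the fewest pieces every piece has nonempty interior, so each
  linear component agrees with p on a nonempty open set. That open set meets the interior of
  some member of any finite closed cover on which p is piecewise affine, and two components
  assigned to the same member agree on an open set, hence coincide.

  Upper bound: let e_0, ..., e_(k-1) be the linear components. Off the hyperplanes e_i = e_j the
  values e_i x are pairwise distinct, so on each (connected) open cell of this arrangement p equals
  a single e_i, and by continuity it does so on the closure, which is the closed cell. The closed
  cells are convex and cover R^n. A cell is determined by the ordering of the values e_i x, so
  there are at most k! of them. Moreover no n + 1 of the k(k-1)/2 hyperplanes realise all sign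
  patterns, because a linear dependence among their normals forbids one; hence the
  Sauer--Shelah--Pajor lemma bounds the number of cells by the sum of C(k(k-1)/2, i) over i \<le> n.
\<close>

section \<open>Shattered sets\<close>

definition shatters :: "'a set set \<Rightarrow> 'a set \<Rightarrow> bool" where
  "shatters F J \<longleftrightarrow> (\<forall>B\<subseteq>J. \<exists>S\<in>F. S \<inter> J = B)"

lemma shatters_mono: "F \<subseteq> G \<Longrightarrow> shatters F J \<Longrightarrow> shatters G J"
  unfolding shatters_def by (meson subsetD)

lemma shatters_image_Diff_singleton:
  assumes "x \<notin> J"
  shows "shatters ((\<lambda>S. S - {x}) ` F) J \<longleftrightarrow> shatters F J"
proof -
  have "(S - {x}) \<inter> J = S \<inter> J" for S using assms by blast
  then show ?thesis by (simp add: shatters_def)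
qed

lemma shatters_insert:
  assumes "x \<notin> J" "shatters {S\<in>F. x \<notin> S} J" "shatters {S\<in>F. x \<in> S} J"
  shows "shatters F (insert x J)"
  unfolding shatters_def
proof (intro allI impI)
  fix B assume B: "B \<subseteq> insert x J"
  show "\<exists>S\<in>F. S \<inter> insert x J = B"
  proof (cases "x \<in> B")
    case True
    have "B - {x} \<subseteq> J" using B by blast
    then obtain S where "S \<in> F" "x \<in> S" "S \<inter> J = B - {x}"
      using assms(3) unfolding shatters_def by (metis (mono_tags, lifting) mem_Collect_eq)
    then show ?thesis using True by (intro bexI[of _ S]) auto
  next
    case False
    have "B \<subseteq> J" using B False by blast
    then obtain S where "S \<in> F" "x \<notin> S" "S \<inter> J = B"
      using assms(2) unfolding shatters_def by (metis (mono_tags, lifting) mem_Collect_eq)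
    then show ?thesis using False by (intro bexI[of _ S]) auto
  qed
qed

lemma card_shattered_split_le:
  assumes "finite X" "x \<notin> X"
  shows "card {J. J \<subseteq> X \<and> shatters {S\<in>F. x \<notin> S} J} + card {J. J \<subseteq> X \<and> shatters {S\<in>F. x \<in> S} J}
    \<le> card {J. J \<subseteq> insert x X \<and> shatters F J}"
proof -
  define F0 where "F0 = {S\<in>F. x \<notin> S}"
  define F1 where "F1 = {S\<in>F. x \<in> S}"
  define sh where "sh G = {J. J \<subseteq> X \<and> shatters G J}" for G
  define sh' where "sh' = {J. J \<subseteq> insert x X \<and> shatters F J}"
  have "finite (sh G)" for G unfolding sh_def using assms(1) by simp
  have "finite sh'" unfolding sh'_def using assms(1) by simp
  have without_x: "sh F0 \<union> sh F1 \<subseteq> sh' - {J. x \<in> J}"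
  proof
    fix J assume "J \<in> sh F0 \<union> sh F1"
    then have "J \<subseteq> X" "shatters F0 J \<or> shatters F1 J" by (auto simp: sh_def)
    moreover have "F0 \<subseteq> F" "F1 \<subseteq> F" by (auto simp: F0_def F1_def)
    ultimately have "shatters F J" using shatters_mono by metis
    then show "J \<in> sh' - {J. x \<in> J}" using \<open>J \<subseteq> X\<close> assms(2) by (auto simp: sh'_def)
  qed
  have with_x: "insert x ` (sh F0 \<inter> sh F1) \<subseteq> sh' \<inter> {J. x \<in> J}"
  proof (rule image_subsetI)
    fix J assume "J \<in> sh F0 \<inter> sh F1"
    then have "J \<subseteq> X" "shatters F0 J" "shatters F1 J" by (auto simp: sh_def)
    then have "shatters F (insert x J)"
      using assms(2) shatters_insert[of x J F] unfolding F0_def F1_def by auto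
    then show "insert x J \<in> sh' \<inter> {J. x \<in> J}" using \<open>J \<subseteq> X\<close> by (auto simp: sh'_def)
  qed
  have "inj_on (insert x) (sh F0 \<inter> sh F1)"
  proof (rule inj_onI)
    fix J J' assume "J \<in> sh F0 \<inter> sh F1" "J' \<in> sh F0 \<inter> sh F1" "insert x J = insert x J'"
    moreover have "x \<notin> J" "x \<notin> J'" using calculation(1,2) assms(2) by (auto simp: sh_def)
    ultimately show "J = J'" by (metis Diff_insert_absorb)
  qed
  then have card_with_x: "card (sh F0 \<inter> sh F1) \<le> card (sh' \<inter> {J. x \<in> J})"
    using card_mono[OF _ with_x] \<open>finite sh'\<close> by (simp add: card_image)
  have "card (sh F0) + card (sh F1) = card (sh F0 \<union> sh F1) + card (sh F0 \<inter> sh F1)"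
    by (rule card_Un_Int) fact+
  also have "\<dots> \<le> card (sh' - {J. x \<in> J}) + card (sh' \<inter> {J. x \<in> J})"
    using card_mono[OF _ without_x] card_with_x \<open>finite sh'\<close> by simp
  also have "\<dots> = card sh'"
    using card_Int_Diff[OF \<open>finite sh'\<close>, of "{J. x \<in> J}"] by simp
  finally show ?thesis unfolding sh_def sh'_def F0_def F1_def .
qed

text \<open>Pajor's form of the Sauer--Shelah lemma.\<close>

lemma card_le_card_shattered:
  assumes "finite X" "F \<subseteq> Pow X"
  shows "card F \<le> card {J. J \<subseteq> X \<and> shatters F J}"
  using assms
proof (induction X arbitrary: F rule: finite_induct)
  case empty
  then have "F = {} \<or> F = {{}}" by (simp add: subset_singleton_iff)
  then show ?case
  proof
    assume "F = {{}}"
    then have "{} \<in> {J. J \<subseteq> {} \<and> shatters F J}" by (simp add: shatters_def)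
    then have "0 < card {J. J \<subseteq> {} \<and> shatters F J}" by (simp add: card_gt_0_iff)
    then show ?thesis using \<open>F = {{}}\<close> by simp
  qed simp
next
  case (insert x X F)
  define F0 where "F0 = {S\<in>F. x \<notin> S}"
  define F1 where "F1 = {S\<in>F. x \<in> S}"
  have "finite F" by (rule finite_subset[OF insert.prems]) (simp add: insert.hyps(1))
  have "F \<inter> {S. x \<in> S} = F1" "F - {S. x \<in> S} = F0" by (auto simp: F0_def F1_def)
  then have "card F = card F0 + card F1"
    using card_Int_Diff[OF \<open>finite F\<close>, of "{S. x \<in> S}"] by simp
  also have "card F0 \<le> card {J. J \<subseteq> X \<and> shatters F0 J}"
    using insert.prems by (intro insert.IH) (auto simp: F0_def)
  also have "card F1 \<le> card {J. J \<subseteq> X \<and> shatters F1 J}"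
  proof -
    have "card ((\<lambda>S. S - {x}) ` F1) = card F1"
      by (rule card_image) (auto simp: F1_def inj_on_def)
    moreover have "card ((\<lambda>S. S - {x}) ` F1) \<le> card {J. J \<subseteq> X \<and> shatters ((\<lambda>S. S - {x}) ` F1) J}"
      using insert.prems by (intro insert.IH) (auto simp: F1_def)
    moreover have "shatters ((\<lambda>S. S - {x}) ` F1) J \<longleftrightarrow> shatters F1 J" if "J \<subseteq> X" for J
      using that insert.hyps(2) by (intro shatters_image_Diff_singleton) blast
    then have "{J. J \<subseteq> X \<and> shatters ((\<lambda>S. S - {x}) ` F1) J} = {J. J \<subseteq> X \<and> shatters F1 J}"
      by (intro Collect_cong conj_cong refl)
    ultimately show ?thesis by simp
  qed
  also have "card {J. J \<subseteq> X \<and> shatters F0 J} + card {J. J \<subseteq> X \<and> shatters F1 J}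
      \<le> card {J. J \<subseteq> insert x X \<and> shatters F J}"
    unfolding F0_def F1_def using insert.hyps by (rule card_shattered_split_le)
  finally show ?case by simp
qed

lemma card_subsets_card_le:
  assumes "finite X"
  shows "card {J. J \<subseteq> X \<and> card J \<le> n} = (\<Sum>i=0..n. card X choose i)"
proof -
  have "{J. J \<subseteq> X \<and> card J \<le> n} = (\<Union>i\<in>{0..n}. {J. J \<subseteq> X \<and> card J = i})"
    by auto
  moreover have "finite {J. J \<subseteq> X \<and> card J = i}" for i
    using assms by (simp add: finite_subset[of _ "Pow X"] subset_eq)
  ultimately have "card {J. J \<subseteq> X \<and> card J \<le> n} = (\<Sum>i=0..n. card {J. J \<subseteq> X \<and> card J = i})"
    by (simp only:) (rule card_UN_disjoint, auto)
  then show ?thesis by (simp add: n_subsets[OF assms])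
qed

section \<open>Orderings of finitely many values\<close>

definition index_pairs :: "nat \<Rightarrow> (nat \<times> nat) set" where
  "index_pairs k = {(i, j). i < j \<and> j < k}"

lemma finite_index_pairs: "finite (index_pairs k)"
  by (rule finite_subset[of _ "{..<k} \<times> {..<k}"]) (auto simp: index_pairs_def)

lemma card_index_pairs: "card (index_pairs k) = k choose 2"
proof (induction k)
  case 0
  then show ?case by (simp add: index_pairs_def)
next
  case (Suc k)
  have "index_pairs (Suc k) = index_pairs k \<union> (\<lambda>i. (i, k)) ` {..<k}"
    by (auto simp: index_pairs_def less_Suc_eq)
  moreover have "index_pairs k \<inter> (\<lambda>i. (i, k)) ` {..<k} = {}"
    by (auto simp: index_pairs_def)
  ultimately have "card (index_pairs (Suc k)) = card (index_pairs k) + k"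
    using finite_index_pairs by (simp add: card_Un_disjoint card_image inj_on_def)
  then show ?case using Suc.IH by (simp add: numeral_2_eq_2)
qed

text \<open>The identity outside \<open>{..<k}\<close>, so that ranking yields a permutation in the sense of \<open>permutes\<close>.\<close>

definition sort_rank :: "nat \<Rightarrow> (nat \<Rightarrow> 'a::linorder) \<Rightarrow> nat \<Rightarrow> nat" where
  "sort_rank k v i = (if i < k then card {j. j < k \<and> v j < v i} else i)"

lemma sort_rank_less_iff:
  assumes "inj_on v {..<k}" "i < k" "j < k"
  shows "sort_rank k v j < sort_rank k v i \<longleftrightarrow> v j < v i"
proof -
  have less: "sort_rank k v j < sort_rank k v i" if "i < k" "j < k" "v j < v i" for i j
  proof -
    have "{l. l < k \<and> v l < v j} \<subset> {l. l < k \<and> v l < v i}"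
      using that by auto
    then show ?thesis using that by (simp add: sort_rank_def psubset_card_mono)
  qed
  show ?thesis
  proof
    assume rank_less: "sort_rank k v j < sort_rank k v i"
    show "v j < v i"
    proof (rule ccontr)
      assume "\<not> v j < v i"
      moreover have "i \<noteq> j" using rank_less by auto
      then have "v i \<noteq> v j" using assms inj_onD by fastforce
      ultimately have "sort_rank k v i < sort_rank k v j" using less assms(2,3) by simp
      then show False using rank_less by simp
    qed
  qed (use less assms in blast)
qed

lemma sort_rank_permutes:
  assumes "inj_on v {..<k}"
  shows "sort_rank k v permutes {..<k}"
proof (rule bij_imp_permutes)
  have "inj_on (sort_rank k v) {..<k}"
  proof (rule inj_onI)
    fix i j assume "i \<in> {..<k}" "j \<in> {..<k}" "sort_rank k v i = sort_rank k v j"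
    then show "i = j"
      using sort_rank_less_iff[OF assms, of i j] sort_rank_less_iff[OF assms, of j i]
        inj_onD[OF assms, of i j] by (auto simp: linorder_neq_iff)
  qed
  moreover have "sort_rank k v ` {..<k} \<subseteq> {..<k}"
  proof (clarsimp simp: sort_rank_def)
    fix i assume "i < k"
    then have "{j. j < k \<and> v j < v i} \<subset> {..<k}" by auto
    then show "card {j. j < k \<and> v j < v i} < k"
      using psubset_card_mono[of "{..<k}"] by simp
  qed
  ultimately show "bij_betw (sort_rank k v) {..<k} {..<k}"
    by (simp add: bij_betw_def endo_inj_surj)
qed (simp add: sort_rank_def)

lemma card_order_patterns_le_fact:
  fixes V :: "(nat \<Rightarrow> 'a::linorder) set"
  assumes "\<And>v. v \<in> V \<Longrightarrow> inj_on v {..<k}"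
  shows "card ((\<lambda>v. {(i, j) \<in> index_pairs k. v j < v i}) ` V) \<le> fact k"
proof -
  define pattern where "pattern \<pi> = {(i, j) \<in> index_pairs k. \<pi> j < \<pi> i}" for \<pi> :: "nat \<Rightarrow> nat"
  have "{(i, j) \<in> index_pairs k. v j < v i} = pattern (sort_rank k v)" if "v \<in> V" for v
    using sort_rank_less_iff[OF assms[OF that]] by (auto simp: pattern_def index_pairs_def)
  then have "(\<lambda>v. {(i, j) \<in> index_pairs k. v j < v i}) ` V = pattern ` sort_rank k ` V"
    unfolding image_image by (rule image_cong[OF refl])
  moreover have ranks: "sort_rank k ` V \<subseteq> {\<pi>. \<pi> permutes {..<k}}"
    using assms sort_rank_permutes by blast
  moreover have perms: "finite {\<pi>. \<pi> permutes {..<k}}" "card {\<pi>. \<pi> permutes {..<k}} = fact k"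
    by (simp_all add: finite_permutations card_permutations)
  ultimately have "card ((\<lambda>v. {(i, j) \<in> index_pairs k. v j < v i}) ` V) \<le> card (sort_rank k ` V)"
    using card_image_le finite_subset by metis
  also have "\<dots> \<le> fact k"
    using card_mono[OF perms(1) ranks] perms(2) by simp
  finally show ?thesis .
qed

lemma open_subset_finite_closed_Union_meets_interior:
  fixes U :: "'a::topological_space set set"
  assumes "finite U" "\<And>S. S \<in> U \<Longrightarrow> closed S" "open B" "B \<noteq> {}" "B \<subseteq> \<Union>U"
  shows "\<exists>S\<in>U. interior S \<inter> B \<noteq> {}"
  using assms
proof (induction U arbitrary: B rule: finite_induct)
  case empty
  then show ?case by auto
next
  case (insert S U B)
  show ?case
  proof (cases "B \<subseteq> S")
    case True
    then have "B \<subseteq> interior S" using insert.prems(2) by (simp add: interior_maximal)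
    then show ?thesis using insert.prems(3) by blast
  next
    case False
    then have "\<exists>S'\<in>U. interior S' \<inter> (B - S) \<noteq> {}"
      using insert.prems by (intro insert.IH) auto
    then show ?thesis by blast
  qed
qed

lemma connected_eq_single_selection:
  fixes p :: "'a::topological_space \<Rightarrow> 'b::metric_space" and f :: "'i \<Rightarrow> 'a \<Rightarrow> 'b"
  assumes "connected S" "S \<noteq> {}" "finite I" "continuous_on S p"
    "\<And>i. i \<in> I \<Longrightarrow> continuous_on S (f i)"
    "\<And>x. x \<in> S \<Longrightarrow> \<exists>i\<in>I. p x = f i x"
    "\<And>x. x \<in> S \<Longrightarrow> inj_on (\<lambda>i. f i x) I"
  obtains i where "i \<in> I" "\<And>x. x \<in> S \<Longrightarrow> p x = f i x"
proof -
  have closedin_eq: "closedin (top_of_set S) {x \<in> S. p x = f i x}" if "i \<in> I" for i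
  proof -
    have "continuous_map (top_of_set S) euclidean p" "continuous_map (top_of_set S) euclidean (f i)"
      using assms(4) assms(5)[OF that] by (simp_all add: continuous_map_iff_continuous)
    then show ?thesis
      using closedin_continuous_maps_eq[of euclidean "top_of_set S" p "f i"] by simp
  qed
  obtain y i0 where "y \<in> S" "i0 \<in> I" "p y = f i0 y" using assms(2,6) by blast
  define E1 where "E1 = {x \<in> S. p x = f i0 x}"
  define E2 where "E2 = (\<Union>i\<in>I - {i0}. {x \<in> S. p x = f i x})"
  have "closedin (top_of_set S) E1" unfolding E1_def using closedin_eq \<open>i0 \<in> I\<close> .
  moreover have "closedin (top_of_set S) E2"
    unfolding E2_def using assms(3) closedin_eq by (intro closedin_Union) auto
  moreover have "E1 \<union> E2 = S" using assms(6) by (auto simp: E1_def E2_def)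
  moreover have "E1 \<inter> E2 = {}"
  proof -
    have "f i x \<noteq> f i0 x" if "x \<in> S" "i \<in> I - {i0}" for x i
      using assms(7)[OF that(1)] that(2) \<open>i0 \<in> I\<close> by (auto dest: inj_onD)
    then show ?thesis unfolding E1_def E2_def by fastforce
  qed
  moreover have "E1 \<noteq> {}" using \<open>y \<in> S\<close> \<open>p y = f i0 y\<close> by (auto simp: E1_def)
  ultimately have "E2 = {}" using assms(1) unfolding connected_closedin_eq by metis
  then show ?thesis using \<open>E1 \<union> E2 = S\<close> \<open>i0 \<in> I\<close> by (intro that[of i0]) (auto simp: E1_def)
qed

lemma affine_funE:
  assumes "affine_fun f"
  obtains a b where "\<And>x. f x = inner a x + b"
  using assms unfolding affine_fun_def by blast

lemma affine_fun_const: "affine_fun (\<lambda>x. c)"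
  unfolding affine_fun_def by (rule exI[of _ 0]) simp

lemma affine_fun_uminus:
  assumes "affine_fun f"
  shows "affine_fun (\<lambda>x. - f x)"
proof -
  obtain a b where "\<And>x. f x = inner a x + b" using assms affine_funE by blast
  then have "\<And>x. - f x = inner (- a) x + (- b)" by simp
  then show ?thesis unfolding affine_fun_def by blast
qed

lemma affine_fun_diff:
  assumes "affine_fun f" "affine_fun g"
  shows "affine_fun (\<lambda>x. f x - g x)"
proof -
  obtain a b a' b' where "\<And>x. f x = inner a x + b" "\<And>x. g x = inner a' x + b'"
    using assms affine_funE by metis
  then have "\<And>x. f x - g x = inner (a - a') x + (b - b')" by (simp add: inner_diff_left)
  then show ?thesis unfolding affine_fun_def by blast
qed

lemma affine_fun_convex_combination:
  "affine_fun f \<Longrightarrow> f ((1 - u) *\<^sub>R x + u *\<^sub>R y) = (1 - u) * f x + u * f y"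
  by (elim affine_funE) (simp add: inner_add_right algebra_simps)

lemma continuous_on_affine_fun: "affine_fun f \<Longrightarrow> continuous_on S f"
  by (elim affine_funE) (simp add: continuous_intros)

lemma affine_fun_superlevel_sets:
  assumes "affine_fun f"
  shows "closed {x. 0 \<le> f x}" "convex {x. 0 \<le> f x}" "convex {x. 0 < f x}"
proof -
  obtain a b where "\<And>x. f x = inner a x + b" using assms affine_funE by blast
  then have "{x. 0 \<le> f x} = {x. inner a x \<ge> - b}" "{x. 0 < f x} = {x. inner a x > - b}"
    by auto
  then show "closed {x. 0 \<le> f x}" "convex {x. 0 \<le> f x}" "convex {x. 0 < f x}"
    by (simp_all add: closed_halfspace_ge convex_halfspace_ge convex_halfspace_gt)
qed

lemma affine_fun_eq_on_open:
  assumes "affine_fun f" "affine_fun g" "open W" "W \<noteq> {}" "\<And>x. x \<in> W \<Longrightarrow> f x = g x"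
  shows "f = g"
proof -
  obtain w c where d: "\<And>x. f x - g x = inner w x + c"
    using affine_fun_diff[OF assms(1,2)] affine_funE by blast
  obtain z r where "z \<in> W" "r > 0" "ball z r \<subseteq> W"
    using assms(3,4) open_contains_ball by blast
  have "w = 0"
  proof (rule ccontr)
    assume "w \<noteq> 0"
    define y where "y = z + (r / (2 * norm w)) *\<^sub>R w"
    have "dist z y < r" using \<open>w \<noteq> 0\<close> \<open>r > 0\<close> by (simp add: y_def dist_norm)
    then have "y \<in> W" using \<open>ball z r \<subseteq> W\<close> by auto
    have "inner w y + c = (inner w z + c) + (r / (2 * norm w)) * inner w w"
      by (simp add: y_def inner_add_right algebra_simps)
    moreover have "inner w y + c = 0" "inner w z + c = 0"
      using d assms(5) \<open>y \<in> W\<close> \<open>z \<in> W\<close> by (metis diff_self)+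
    ultimately show False using \<open>w \<noteq> 0\<close> \<open>r > 0\<close> by simp
  qed
  then have "c = 0" using d[of z] assms(5) \<open>z \<in> W\<close> by simp
  then show ?thesis using d \<open>w = 0\<close> by (simp add: fun_eq_iff)
qed

section \<open>Hyperplane arrangements\<close>

definition generic_points :: "'q set \<Rightarrow> ('q \<Rightarrow> 'a \<Rightarrow> real) \<Rightarrow> 'a set" where
  "generic_points X h = {x. \<forall>q\<in>X. h q x \<noteq> 0}"

definition sign_pattern :: "'q set \<Rightarrow> ('q \<Rightarrow> 'a \<Rightarrow> real) \<Rightarrow> 'a \<Rightarrow> 'q set" where
  "sign_pattern X h x = {q\<in>X. 0 < h q x}"

definition closed_cell :: "'q set \<Rightarrow> ('q \<Rightarrow> 'a \<Rightarrow> real) \<Rightarrow> 'q set \<Rightarrow> 'a set" where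
  "closed_cell X h T = {x. \<forall>q\<in>X. 0 \<le> (if q \<in> T then h q x else - h q x)}"

definition open_cell :: "'q set \<Rightarrow> ('q \<Rightarrow> 'a \<Rightarrow> real) \<Rightarrow> 'q set \<Rightarrow> 'a set" where
  "open_cell X h T = {x. \<forall>q\<in>X. 0 < (if q \<in> T then h q x else - h q x)}"

lemma mem_closed_cell_sign_pattern: "x \<in> closed_cell X h (sign_pattern X h x)"
  by (auto simp: closed_cell_def sign_pattern_def)

lemma mem_open_cell_sign_pattern:
  "x \<in> generic_points X h \<Longrightarrow> x \<in> open_cell X h (sign_pattern X h x)"
  by (auto simp: open_cell_def sign_pattern_def generic_points_def)

lemma open_cell_subset_generic_points: "open_cell X h T \<subseteq> generic_points X h"
  by (auto simp: open_cell_def generic_points_def split: if_splits)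

lemma sign_patterns_subset_Pow: "sign_pattern X h ` S \<subseteq> Pow X"
  by (auto simp: sign_pattern_def)

lemma exists_nontrivial_linear_relation:
  fixes v :: "'i \<Rightarrow> 'a::euclidean_space"
  assumes "finite J" "card J > DIM('a)"
  obtains c where "\<exists>q\<in>J. c q \<noteq> 0" "(\<Sum>q\<in>J. c q *\<^sub>R v q) = 0"
proof (cases "inj_on v J")
  case True
  then have "dependent (v ` J)"
    using assms by (intro dependent_biggerset) (simp add: card_image)
  then obtain u where u: "\<exists>w\<in>v ` J. u w \<noteq> 0" "(\<Sum>w\<in>v ` J. u w *\<^sub>R w) = 0"
    using dependent_finite[of "v ` J"] assms(1) by auto
  then show ?thesis
    using sum.reindex[OF True, of "\<lambda>w. u w *\<^sub>R w"] by (intro that[of "\<lambda>q. u (v q)"]) auto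
next
  case False
  then obtain q1 q2 where q: "q1 \<in> J" "q2 \<in> J" "q1 \<noteq> q2" "v q1 = v q2"
    unfolding inj_on_def by blast
  define c where "c q = (if q = q1 then 1 else if q = q2 then -1 else (0::real))" for q
  have "c q *\<^sub>R v q = (if q = q1 then v q1 else 0) - (if q = q2 then v q2 else 0)" for q
    using q by (simp add: c_def)
  then have "(\<Sum>q\<in>J. c q *\<^sub>R v q) = v q1 - v q2"
    using q assms(1) by (simp add: sum_subtractf)
  then show ?thesis using q by (intro that[of c]) (auto simp: c_def)
qed

lemma sign_pattern_ne_if_linear_relation:
  fixes h :: "'q \<Rightarrow> 'a::real_inner \<Rightarrow> real"
  assumes "finite J" "\<And>q x. q \<in> J \<Longrightarrow> h q x = inner (\<alpha> q) x + \<beta> q"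
    and "(\<Sum>q\<in>J. c q *\<^sub>R \<alpha> q) = 0" "0 \<le> (\<Sum>q\<in>J. c q * \<beta> q)"
    and "q0 \<in> J" "c q0 \<noteq> 0" "x \<in> generic_points X h" "J \<subseteq> X"
  shows "sign_pattern X h x \<inter> J \<noteq> {q\<in>J. c q < 0}"
proof
  assume pattern: "sign_pattern X h x \<inter> J = {q\<in>J. c q < 0}"
  have neg: "c q * h q x < 0" if "q \<in> J" "c q \<noteq> 0" for q
  proof -
    have "h q x \<noteq> 0" "0 < h q x \<longleftrightarrow> c q < 0"
      using assms(7,8) pattern that(1) by (auto simp: generic_points_def sign_pattern_def)
    then show ?thesis using that(2)
      by (metis linorder_neqE_linordered_idom mult_neg_pos mult_pos_neg)
  qed
  have "(\<Sum>q\<in>J. c q * h q x) = inner (\<Sum>q\<in>J. c q *\<^sub>R \<alpha> q) x + (\<Sum>q\<in>J. c q * \<beta> q)"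
    by (simp add: assms(2) inner_sum_left distrib_left sum.distrib)
  then have "0 \<le> (\<Sum>q\<in>J. c q * h q x)" using assms(3,4) by simp
  moreover have "0 < (\<Sum>q\<in>J. - (c q * h q x))"
    using neg assms(1,5,6) by (intro sum_pos2[of J q0]) (auto simp: less_eq_real_def)
  ultimately show False by (simp add: sum_negf)
qed

context
  fixes X :: "'q set" and h :: "'q \<Rightarrow> real^'n \<Rightarrow> real"
  assumes affine_h: "\<And>q. q \<in> X \<Longrightarrow> affine_fun (h q)"
begin

lemma affine_fun_oriented: "q \<in> X \<Longrightarrow> affine_fun (\<lambda>x. if q \<in> T then h q x else - h q x)"
  using affine_h affine_fun_uminus by (cases "q \<in> T") auto

lemma oriented_superlevel_sets:
  assumes "q \<in> X"
  shows "closed {x. 0 \<le> (if q \<in> T then h q x else - h q x)}"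
    "convex {x. 0 \<le> (if q \<in> T then h q x else - h q x)}"
    "convex {x. 0 < (if q \<in> T then h q x else - h q x)}"
  using affine_fun_superlevel_sets[OF affine_fun_oriented[OF assms]] by blast+

lemma closed_cell_eq_INT:
  "closed_cell X h T = (\<Inter>q\<in>X. {x. 0 \<le> (if q \<in> T then h q x else - h q x)})"
  by (auto simp: closed_cell_def)

lemma open_cell_eq_INT:
  "open_cell X h T = (\<Inter>q\<in>X. {x. 0 < (if q \<in> T then h q x else - h q x)})"
  by (auto simp: open_cell_def)

lemma closed_closed_cell: "closed (closed_cell X h T)"
  unfolding closed_cell_eq_INT by (intro closed_INT ballI oriented_superlevel_sets)

lemma convex_closed_cell: "convex (closed_cell X h T)"
  unfolding closed_cell_eq_INT by (intro convex_INT ballI oriented_superlevel_sets)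

lemma convex_open_cell: "convex (open_cell X h T)"
  unfolding open_cell_eq_INT by (intro convex_INT ballI oriented_superlevel_sets)

lemma closed_cell_subset_closure_open_cell:
  assumes "open_cell X h T \<noteq> {}"
  shows "closed_cell X h T \<subseteq> closure (open_cell X h T)"
proof
  fix z assume z: "z \<in> closed_cell X h T"
  obtain y where y: "y \<in> open_cell X h T" using assms by blast
  show "z \<in> closure (open_cell X h T)"
  proof (cases "z = y")
    case True
    then show ?thesis using y closure_subset by blast
  next
    case False
    have "open_segment y z \<subseteq> open_cell X h T"
    proof
      fix w assume "w \<in> open_segment y z"
      then obtain u where u: "0 < u" "u < 1" and w: "w = (1 - u) *\<^sub>R y + u *\<^sub>R z"
        by (auto simp: in_segment)
      show "w \<in> open_cell X h T"
        unfolding open_cell_def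
      proof (intro CollectI ballI)
        fix q assume q: "q \<in> X"
        define s where "s x = (if q \<in> T then h q x else - h q x)" for x
        have "s w = (1 - u) * s y + u * s z"
          unfolding w s_def by (rule affine_fun_convex_combination[OF affine_fun_oriented[OF q]])
        moreover have "0 < s y" "0 \<le> s z"
          using y z q by (auto simp: open_cell_def closed_cell_def s_def)
        ultimately show "0 < s w" using u by (simp add: add_pos_nonneg)
      qed
    qed
    then have "closed_segment y z \<subseteq> closure (open_cell X h T)"
      using closure_mono closure_open_segment False by metis
    then show ?thesis by auto
  qed
qed

lemma closure_generic_points:
  assumes "finite X" "\<And>q. q \<in> X \<Longrightarrow> h q \<noteq> (\<lambda>x. 0)"
  shows "closure (generic_points X h) = UNIV"
proof -
  define Z where "Z = (\<lambda>q. {x. h q x = 0}) ` X"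
  have "generic_points X h = - \<Union>Z" by (auto simp: generic_points_def Z_def)
  moreover have "interior (\<Union>Z) = {}"
  proof (rule ccontr)
    assume "interior (\<Union>Z) \<noteq> {}"
    moreover have "closed S" if "S \<in> Z" for S
      using that continuous_on_affine_fun[OF affine_h] by (auto simp: Z_def intro!: closed_Collect_eq)
    ultimately have "\<exists>S\<in>Z. interior S \<inter> interior (\<Union>Z) \<noteq> {}"
      using assms(1) interior_subset[of "\<Union>Z"] unfolding Z_def
      by (intro open_subset_finite_closed_Union_meets_interior) auto
    then obtain q where "q \<in> X" "interior {x. h q x = 0} \<noteq> {}" by (auto simp: Z_def)
    then have "h q = (\<lambda>x. 0)"
      using interior_subset
      by (intro affine_fun_eq_on_open[OF affine_h[OF \<open>q \<in> X\<close>] affine_fun_const open_interior]) auto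
    then show False using assms(2) \<open>q \<in> X\<close> by blast
  qed
  ultimately show ?thesis by (simp add: closure_complement)
qed

lemma Union_closed_cells:
  assumes "finite X" "\<And>q. q \<in> X \<Longrightarrow> h q \<noteq> (\<lambda>x. 0)"
  shows "\<Union>(closed_cell X h ` sign_pattern X h ` generic_points X h) = UNIV"
proof -
  let ?cells = "closed_cell X h ` sign_pattern X h ` generic_points X h"
  have "finite ?cells"
    using assms(1) by (intro finite_imageI finite_subset[OF sign_patterns_subset_Pow]) simp
  then have "closed (\<Union>?cells)"
    using closed_closed_cell by (intro closed_Union) auto
  moreover have "generic_points X h \<subseteq> \<Union>?cells"
  proof
    fix x assume "x \<in> generic_points X h"
    then have "closed_cell X h (sign_pattern X h x) \<in> ?cells" by (intro imageI)
    then show "x \<in> \<Union>?cells" using mem_closed_cell_sign_pattern by (rule UnionI)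
  qed
  ultimately have "closure (generic_points X h) \<subseteq> \<Union>?cells" by (rule closure_minimal[rotated])
  then show ?thesis using closure_generic_points[OF assms] by (simp add: top.extremum_unique)
qed

lemma card_shattered_by_sign_patterns_le:
  assumes "J \<subseteq> X" "finite J" "shatters (sign_pattern X h ` generic_points X h) J"
  shows "card J \<le> CARD('n)"
proof (rule ccontr)
  assume "\<not> card J \<le> CARD('n)"
  then have "card J > DIM(real^'n)" by simp
  have "\<forall>q\<in>J. \<exists>a b. \<forall>x. h q x = inner a x + b"
    using affine_h assms(1) unfolding affine_fun_def by (simp add: subset_iff)
  then obtain \<alpha> \<beta> where h_eq: "\<And>q x. q \<in> J \<Longrightarrow> h q x = inner (\<alpha> q) x + \<beta> q"
    by metis
  obtain c0 where c0: "\<exists>q\<in>J. c0 q \<noteq> 0" "(\<Sum>q\<in>J. c0 q *\<^sub>R \<alpha> q) = 0"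
    using exists_nontrivial_linear_relation[OF assms(2) \<open>card J > _\<close>] by blast
  define c where "c = (if 0 \<le> (\<Sum>q\<in>J. c0 q * \<beta> q) then c0 else (\<lambda>q. - c0 q))"
  have c: "\<exists>q\<in>J. c q \<noteq> 0" "(\<Sum>q\<in>J. c q *\<^sub>R \<alpha> q) = 0" "0 \<le> (\<Sum>q\<in>J. c q * \<beta> q)"
    using c0 by (auto simp: c_def sum_negf)
  have "{q\<in>J. c q < 0} \<subseteq> J" by auto
  then obtain S where "S \<in> sign_pattern X h ` generic_points X h" "S \<inter> J = {q\<in>J. c q < 0}"
    using assms(3) unfolding shatters_def by meson
  then show False
    using sign_pattern_ne_if_linear_relation[OF assms(2) h_eq c(2,3) _ _ _ assms(1)] c(1)
    by (auto elim!: imageE)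
qed

lemma card_sign_patterns_le:
  assumes "finite X"
  shows "card (sign_pattern X h ` generic_points X h) \<le> (\<Sum>i=0..CARD('n). card X choose i)"
proof -
  let ?F = "sign_pattern X h ` generic_points X h"
  have "card ?F \<le> card {J. J \<subseteq> X \<and> shatters ?F J}"
    by (rule card_le_card_shattered[OF assms sign_patterns_subset_Pow])
  also have "\<dots> \<le> card {J. J \<subseteq> X \<and> card J \<le> CARD('n)}"
  proof (rule card_mono)
    show "finite {J. J \<subseteq> X \<and> card J \<le> CARD('n)}" using assms by simp
    show "{J. J \<subseteq> X \<and> shatters ?F J} \<subseteq> {J. J \<subseteq> X \<and> card J \<le> CARD('n)}"
      using card_shattered_by_sign_patterns_le finite_subset[OF _ assms] by (intro Collect_mono) meson
  qed
  also have "\<dots> = (\<Sum>i=0..CARD('n). card X choose i)"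
    by (rule card_subsets_card_le[OF assms])
  finally show ?thesis .
qed

end

lemma cpwl_cover_min_pieces:
  assumes "is_cpwl p"
  obtains U where "cpwl_cover p U" "card U = min_pieces p"
proof -
  obtain U where "cpwl_cover p U" using assms unfolding is_cpwl_def by blast
  then have "\<exists>m U. cpwl_cover p U \<and> card U = m" by blast
  then have "\<exists>U. cpwl_cover p U \<and> card U = min_pieces p"
    unfolding min_pieces_def by (rule LeastI_ex)
  then show ?thesis using that by blast
qed

lemma interior_nonempty_if_min_pieces:
  assumes "cpwl_cover p U" "card U = min_pieces p" "S \<in> U"
  shows "interior S \<noteq> {}"
proof
  assume "interior S = {}"
  define U' where "U' = U - {S}"
  have "finite U" using assms(1) by (simp add: cpwl_cover_def)
  then have "open (- \<Union>U')" using assms(1) unfolding cpwl_cover_def U'_def by auto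
  moreover have "- \<Union>U' \<subseteq> S" using assms(1,3) unfolding cpwl_cover_def U'_def by auto
  ultimately have "- \<Union>U' \<subseteq> interior S" by (rule interior_maximal[rotated])
  then have "\<Union>U' = UNIV" using \<open>interior S = {}\<close> by auto
  then have "cpwl_cover p U'" using assms(1) unfolding cpwl_cover_def U'_def by auto
  moreover have "card U' < min_pieces p"
    using \<open>finite U\<close> assms(2,3) unfolding U'_def by (metis card_Diff1_less)
  ultimately show False
    unfolding min_pieces_def using not_less_Least by blast
qed

lemma affine_fun_linear_component: "g \<in> linear_components p \<Longrightarrow> affine_fun g"
  by (simp add: linear_components_def)

lemma linear_component_agrees_on_open:
  assumes "g \<in> linear_components p"
  shows "\<exists>W. open W \<and> W \<noteq> {} \<and> (\<forall>x\<in>W. g x = p x)"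
proof -
  obtain U V where U: "cpwl_cover p U" "card U = min_pieces p"
    and V: "V \<subseteq> U" "V \<noteq> {}" "\<forall>x\<in>\<Union>V. g x = p x"
    using assms unfolding linear_components_def by blast
  obtain S where "S \<in> V" using V(2) by blast
  then have "interior S \<noteq> {}" using interior_nonempty_if_min_pieces[OF U] V(1) by blast
  moreover have "\<forall>x\<in>interior S. g x = p x" using V(3) \<open>S \<in> V\<close> interior_subset by blast
  ultimately show ?thesis using open_interior by blast
qed

lemma linear_component_at:
  assumes "is_cpwl p"
  shows "\<exists>g\<in>linear_components p. g x = p x"
proof -
  obtain U where U: "cpwl_cover p U" "card U = min_pieces p"
    using assms by (rule cpwl_cover_min_pieces)
  then obtain S where S: "S \<in> U" "x \<in> S" unfolding cpwl_cover_def by blast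
  then obtain g where g: "affine_fun g" "\<forall>y\<in>S. p y = g y"
    using U unfolding cpwl_cover_def affine_on_set_def by blast
  have "{S} \<subseteq> U" "{S} \<noteq> {}" "\<forall>y\<in>\<Union>{S}. g y = p y" using S g(2) by auto
  then have "g \<in> linear_components p" unfolding linear_components_def using U g(1) by blast
  then show ?thesis using g S by auto
qed

lemma continuous_on_cpwl:
  assumes "is_cpwl p"
  shows "continuous_on UNIV p"
proof -
  obtain U where U: "cpwl_cover p U" using assms unfolding is_cpwl_def by blast
  have "continuous_on S p" if "S \<in> U" for S
  proof -
    have "affine_on_set p S" using U that by (simp add: cpwl_cover_def)
    then obtain g where g: "affine_fun g" "\<forall>y\<in>S. p y = g y"
      unfolding affine_on_set_def by blast
    show ?thesis by (rule continuous_on_eq[OF continuous_on_affine_fun[OF g(1)]]) (use g(2) in simp)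
  qed
  moreover have "finite U" "\<And>S. S \<in> U \<Longrightarrow> closed S" "\<Union>U = UNIV"
    using U unfolding cpwl_cover_def by simp_all
  ultimately show ?thesis using continuous_on_closed_Union[of U "\<lambda>S. S" p] by simp
qed

lemma linear_components_subset_image:
  assumes "cpwl_cover p U"
  obtains f where "linear_components p \<subseteq> f ` U"
proof
  define f where "f S = (SOME g. affine_fun g \<and> (\<forall>x\<in>S. p x = g x))" for S
  have f: "affine_fun (f S) \<and> (\<forall>x\<in>S. p x = f S x)" if "S \<in> U" for S
  proof -
    have "\<exists>g. affine_fun g \<and> (\<forall>x\<in>S. p x = g x)"
      using assms that unfolding cpwl_cover_def affine_on_set_def by blast
    then show ?thesis unfolding f_def by (rule someI_ex)
  qed
  show "linear_components p \<subseteq> f ` U"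
  proof
    fix g assume g: "g \<in> linear_components p"
    obtain W where W: "open W" "W \<noteq> {}" "\<forall>x\<in>W. g x = p x"
      using linear_component_agrees_on_open[OF g] by blast
    have "\<exists>S\<in>U. interior S \<inter> W \<noteq> {}"
      using assms W(1,2) unfolding cpwl_cover_def
      by (intro open_subset_finite_closed_Union_meets_interior) auto
    then obtain S where S: "S \<in> U" "interior S \<inter> W \<noteq> {}" by blast
    have "g = f S"
    proof (rule affine_fun_eq_on_open[of g "f S" "interior S \<inter> W"])
      show "affine_fun g" using g by (rule affine_fun_linear_component)
      show "affine_fun (f S)" using f[OF S(1)] by blast
      show "\<And>x. x \<in> interior S \<inter> W \<Longrightarrow> g x = f S x"
        using W(3) f[OF S(1)] interior_subset by fastforce
    qed (use W(1) S(2) in auto)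
    then show "g \<in> f ` U" using S(1) by blast
  qed
qed

lemma card_linear_components_le:
  assumes "cpwl_cover p U"
  shows "finite (linear_components p)" "card (linear_components p) \<le> card U"
proof -
  obtain f where f: "linear_components p \<subseteq> f ` U"
    using assms by (rule linear_components_subset_image)
  have "finite U" using assms by (simp add: cpwl_cover_def)
  then show "finite (linear_components p)" using f finite_subset by blast
  have "card (linear_components p) \<le> card (f ` U)" using f \<open>finite U\<close> by (intro card_mono) simp_all
  also have "\<dots> \<le> card U" using \<open>finite U\<close> by (rule card_image_le)
  finally show "card (linear_components p) \<le> card U" .
qed

lemma cpwl_cover_if_convex_cover: "Q \<in> convex_covers p \<Longrightarrow> finite Q \<Longrightarrow> cpwl_cover p Q"
  by (simp add: convex_covers_def cpwl_cover_def)

section \<open>The arrangement of pairwise differences\<close>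

definition pairwise_differences :: "(nat \<Rightarrow> 'a \<Rightarrow> real) \<Rightarrow> nat \<times> nat \<Rightarrow> 'a \<Rightarrow> real" where
  "pairwise_differences e q x = e (fst q) x - e (snd q) x"

definition difference_cells :: "nat \<Rightarrow> (nat \<Rightarrow> 'a \<Rightarrow> real) \<Rightarrow> 'a set set" where
  "difference_cells k e =
    closed_cell (index_pairs k) (pairwise_differences e) `
      sign_pattern (index_pairs k) (pairwise_differences e) `
        generic_points (index_pairs k) (pairwise_differences e)"

lemma card_difference_cells_le:
  "card (difference_cells k e)
    \<le> card (sign_pattern (index_pairs k) (pairwise_differences e) `
          generic_points (index_pairs k) (pairwise_differences e))"
  unfolding difference_cells_def using finite_index_pairs
  by (intro card_image_le finite_subset[OF sign_patterns_subset_Pow]) simp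

lemma sign_pattern_pairwise_differences:
  "sign_pattern (index_pairs k) (pairwise_differences e) x = {(i, j) \<in> index_pairs k. e j x < e i x}"
  by (auto simp: sign_pattern_def pairwise_differences_def)

lemma inj_on_at_generic_point:
  assumes "x \<in> generic_points (index_pairs k) (pairwise_differences e)"
  shows "inj_on (\<lambda>i. e i x) {..<k}"
proof (rule inj_onI, rule ccontr)
  fix i j assume ij: "i \<in> {..<k}" "j \<in> {..<k}" "e i x = e j x" "i \<noteq> j"
  then have "(i, j) \<in> index_pairs k \<or> (j, i) \<in> index_pairs k"
    by (auto simp: index_pairs_def linorder_neq_iff)
  then show False
    using assms ij(3) by (auto simp: generic_points_def pairwise_differences_def)
qed

context
  fixes k :: nat and e :: "nat \<Rightarrow> real^'n \<Rightarrow> real"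
  assumes affine_e: "\<And>i. i < k \<Longrightarrow> affine_fun (e i)" and inj_e: "inj_on e {..<k}"
begin

lemma affine_fun_pairwise_differences:
  "q \<in> index_pairs k \<Longrightarrow> affine_fun (pairwise_differences e q)"
  unfolding pairwise_differences_def index_pairs_def
  by (auto intro!: affine_fun_diff affine_e)

lemma pairwise_differences_nonzero:
  assumes "q \<in> index_pairs k"
  shows "pairwise_differences e q \<noteq> (\<lambda>x. 0)"
proof
  assume "pairwise_differences e q = (\<lambda>x. 0)"
  then have "e (fst q) = e (snd q)" by (simp add: pairwise_differences_def fun_eq_iff)
  then show False using assms inj_onD[OF inj_e] by (fastforce simp: index_pairs_def)
qed

lemma closed_convex_difference_cells:
  assumes "C \<in> difference_cells k e"
  shows "closed C" "convex C"
proof -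
  obtain T where "C = closed_cell (index_pairs k) (pairwise_differences e) T"
    using assms unfolding difference_cells_def by blast
  then show "closed C" "convex C"
    using closed_closed_cell[OF affine_fun_pairwise_differences]
      convex_closed_cell[OF affine_fun_pairwise_differences] by simp_all
qed

lemma Union_difference_cells: "\<Union>(difference_cells k e) = UNIV"
  unfolding difference_cells_def
  by (rule Union_closed_cells[OF affine_fun_pairwise_differences finite_index_pairs pairwise_differences_nonzero])

lemma finite_difference_cells: "finite (difference_cells k e)"
  unfolding difference_cells_def
  using finite_index_pairs by (intro finite_imageI finite_subset[OF sign_patterns_subset_Pow]) simp

lemma card_difference_cells_le_sum:
  "card (difference_cells k e) \<le> (\<Sum>i=0..CARD('n). (k choose 2) choose i)"
proof -
  let ?P = "sign_pattern (index_pairs k) (pairwise_differences e) `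
    generic_points (index_pairs k) (pairwise_differences e)"
  have "card (difference_cells k e) \<le> card ?P" by (rule card_difference_cells_le)
  also have "\<dots> \<le> (\<Sum>i=0..CARD('n). card (index_pairs k) choose i)"
    using affine_fun_pairwise_differences finite_index_pairs by (rule card_sign_patterns_le)
  finally show ?thesis by (simp add: card_index_pairs)
qed

lemma card_difference_cells_le_fact: "card (difference_cells k e) \<le> fact k"
proof -
  let ?G = "generic_points (index_pairs k) (pairwise_differences e)"
  have "card (difference_cells k e) \<le> card (sign_pattern (index_pairs k) (pairwise_differences e) ` ?G)"
    by (rule card_difference_cells_le)
  also have "sign_pattern (index_pairs k) (pairwise_differences e) ` ?G
      = (\<lambda>v. {(i, j) \<in> index_pairs k. v j < v i}) ` (\<lambda>x i. e i x) ` ?G"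
    unfolding image_image sign_pattern_pairwise_differences ..
  also have "card \<dots> \<le> fact k"
    using inj_on_at_generic_point by (intro card_order_patterns_le_fact) auto
  finally show ?thesis .
qed

lemma difference_cell_eq_component:
  assumes "continuous_on UNIV p" "\<And>x. \<exists>i<k. p x = e i x" "C \<in> difference_cells k e"
  obtains i where "i < k" "\<And>x. x \<in> C \<Longrightarrow> p x = e i x"
proof -
  let ?X = "index_pairs k" and ?h = "pairwise_differences e"
  obtain y where y: "y \<in> generic_points ?X ?h" and C: "C = closed_cell ?X ?h (sign_pattern ?X ?h y)"
    using assms(3) unfolding difference_cells_def by blast
  let ?O = "open_cell ?X ?h (sign_pattern ?X ?h y)"
  have "y \<in> ?O" using y by (rule mem_open_cell_sign_pattern)
  obtain i where i: "i \<in> {..<k}" "\<And>x. x \<in> ?O \<Longrightarrow> p x = e i x"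
  proof (rule connected_eq_single_selection[of ?O "{..<k}" p e])
    show "connected ?O"
      using convex_open_cell[OF affine_fun_pairwise_differences] by (rule convex_connected)
    show "continuous_on ?O p" using assms(1) by (rule continuous_on_subset) simp
    show "continuous_on ?O (e i)" if "i \<in> {..<k}" for i
      using that by (intro continuous_on_affine_fun affine_e) simp
    show "\<exists>i\<in>{..<k}. p x = e i x" for x using assms(2) by auto
    show "inj_on (\<lambda>i. e i x) {..<k}" if "x \<in> ?O" for x
      using that by (intro inj_on_at_generic_point subsetD[OF open_cell_subset_generic_points])
  qed (use \<open>y \<in> ?O\<close> in auto)
  have "closed {x. p x = e i x}"
    using assms(1) continuous_on_affine_fun[OF affine_e] i(1) by (intro closed_Collect_eq) auto
  then have "closure ?O \<subseteq> {x. p x = e i x}"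
    using i(2) by (intro closure_minimal) auto
  moreover have "C \<subseteq> closure ?O"
    unfolding C using \<open>y \<in> ?O\<close> affine_fun_pairwise_differences
    by (intro closed_cell_subset_closure_open_cell) auto
  ultimately show ?thesis using that i(1) by blast
qed

end

lemma difference_cells_convex_cover:
  assumes "is_cpwl p" "inj_on e {..<k}" "linear_components p = e ` {..<k}"
  shows "difference_cells k e \<in> convex_covers p"
proof -
  have affine_e: "affine_fun (e i)" if "i < k" for i
    using that assms(3) affine_fun_linear_component by blast
  have p_eq: "\<exists>i<k. p x = e i x" for x
    using linear_component_at[OF assms(1), of x] assms(3) by force
  show ?thesis
    unfolding convex_covers_def
  proof (intro CollectI conjI ballI)
    fix C assume C: "C \<in> difference_cells k e"
    show "closed C" "convex C" using closed_convex_difference_cells[OF affine_e assms(2) C] by simp_all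
    obtain i where "i < k" "\<And>x. x \<in> C \<Longrightarrow> p x = e i x"
      using difference_cell_eq_component[OF affine_e assms(2) continuous_on_cpwl[OF assms(1)] p_eq C] by blast
    then show "affine_on_set p C" unfolding affine_on_set_def using affine_e by blast
  qed (rule Union_difference_cells[OF affine_e assms(2)])
qed

theorem lemma1:
  fixes p :: "real^'n \<Rightarrow> real" and k :: nat
  assumes "is_cpwl p"
    and "card (linear_components p) = k"
  shows "(\<forall>Q\<in>convex_covers p. finite Q \<longrightarrow> k \<le> card Q)
       \<and> (\<exists>Q\<in>convex_covers p. finite Q \<and> card Q \<le> phi CARD('n) k)"
proof
  show "\<forall>Q\<in>convex_covers p. finite Q \<longrightarrow> k \<le> card Q"
    using assms(2) card_linear_components_le(2) cpwl_cover_if_convex_cover by blast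
  obtain U where "cpwl_cover p U" using assms(1) unfolding is_cpwl_def by blast
  then obtain e where "bij_betw e {..<k} (linear_components p)"
    using ex_bij_betw_nat_finite[OF card_linear_components_le(1)] assms(2)
    by (auto simp: atLeast0LessThan)
  then have inj: "inj_on e {..<k}" and components: "linear_components p = e ` {..<k}"
    by (auto simp: bij_betw_def)
  then have affine_e: "affine_fun (e i)" if "i < k" for i
    using that affine_fun_linear_component by blast
  let ?Q = "difference_cells k e"
  have "(k^2 - k) div 2 = k choose 2"
    by (simp add: choose_two power2_eq_square diff_mult_distrib2)
  then have "card ?Q \<le> phi CARD('n) k"
    unfolding phi_def
    using card_difference_cells_le_sum[OF affine_e inj] card_difference_cells_le_fact[OF affine_e inj]
    by simp
  then show "\<exists>Q\<in>convex_covers p. finite Q \<and> card Q \<le> phi CARD('n) k"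
    using difference_cells_convex_cover[OF assms(1) inj components] finite_difference_cells[OF affine_e inj]
    by blast
qed

end
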